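(* Let $f\in\mathfrak{D}_j$ be homogeneous of degree $j$, let $j-2\ge k_1\ge\cdots\ge k_s\ge 1$ be integers, $h_t\in\mathfrak{D}_{k_t}$ homogeneous for $1\le t\le s$, and $F=f+\sum_{t=1}^s h_tZ_t\in\mathfrak{E}$. For each $t$, define $$B_t=\frac{R\circ\langle f,h_1,\ldots,h_t\rangle+(\operatorname{Ann}_R\langle f,h_1,\ldots,h_{t-1}\rangle)\circ(h_tZ_t+\cdots+h_sZ_s)}{R\circ\langle f,h_1,\ldots,h_{t-1}\rangle+(\operatorname{Ann}_R\langle f,h_1,\ldots,h_t\rangle)\circ(h_{t+1}Z_{t+1}+\cdots+h_sZ_s)}.$$ Then $B_t=0$ if and only if $h_t\in R\circ\langle f,h_1,\ldots,h_{t-1}\rangle$.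
   Context: Let $\mathsf{k}$ be a field, $R=\mathsf{k}\{x_1,\ldots,x_r\}$, $\mathfrak{D}=\mathsf{k}_{DP}[X_1,\ldots,X_r]\subset\mathfrak{E}=\mathsf{k}_{DP}[X_1,\ldots,X_r,Z_1,\ldots,Z_s]$ divided power algebras, with $R$ acting by contraction ($x^{\alpha}\circ X^{[\beta]}=X^{[\beta-\alpha]}$ if $\beta\ge\alpha$ componentwise, $0$ otherwise; the $Z_i$ are untouched by $R$). $R\circ\langle g_1,\ldots\rangle$ is the span of all partials $\varphi\circ g_i$, $\operatorname{Ann}_R\langle g_1,\ldots\rangle$ is the set of elements of $R$ annihilating every $g_i$, and $V\circ g=\{v\circ g:v\in V\}$; sums in $B_t$ are sums of subspaces of $\mathfrak{E}$. *)

theory Defs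
  imports Complex_Main "HOL-Library.Poly_Mapping" "HOL-Library.Function_Algebras"
begin

datatype var = X nat | Z nat

type_synonym mono = "var \<Rightarrow>\<^sub>0 nat"

text \<open>An element of a divided power algebra (or a power series) is given by its
coefficient function on exponent vectors: F gamma is the coefficient of the divided
power monomial X^[gamma] (resp. of the ordinary monomial x^gamma for series).\<close>

definition Xvars :: "nat \<Rightarrow> var set" where
  "Xvars r = {X i | i. 1 \<le> i \<and> i \<le> r}"

definition Zvars :: "nat \<Rightarrow> var set" where
  "Zvars s = {Z i | i. 1 \<le> i \<and> i \<le> s}"

definition mdeg :: "mono \<Rightarrow> nat" where
  "mdeg \<gamma> = (\<Sum>v\<in>Poly_Mapping.keys \<gamma>. Poly_Mapping.lookup \<gamma> v)"

definition DPE :: "nat \<Rightarrow> nat \<Rightarrow> (mono \<Rightarrow> 'k::field) set" where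
  "DPE r s = {F. finite {\<gamma>. F \<gamma> \<noteq> 0} \<and>
                 (\<forall>\<gamma>. F \<gamma> \<noteq> 0 \<longrightarrow> Poly_Mapping.keys \<gamma> \<subseteq> Xvars r \<union> Zvars s)}"

definition DPD :: "nat \<Rightarrow> (mono \<Rightarrow> 'k::field) set" where
  "DPD r = DPE r 0"

definition DPDj :: "nat \<Rightarrow> nat \<Rightarrow> (mono \<Rightarrow> 'k::field) set" where
  "DPDj r j = {F \<in> DPD r. \<forall>\<gamma>. F \<gamma> \<noteq> 0 \<longrightarrow> mdeg \<gamma> = j}"

definition Rser :: "nat \<Rightarrow> (mono \<Rightarrow> 'k::field) set" where
  "Rser r = {\<phi>. \<forall>\<alpha>. \<phi> \<alpha> \<noteq> 0 \<longrightarrow> Poly_Mapping.keys \<alpha> \<subseteq> Xvars r}"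

text \<open>Contraction action: x^alpha o X^[beta] = X^[beta - alpha] if beta \<ge> alpha, else 0,
extended linearly; (phi o F)(gamma) = sum_alpha phi(alpha) F(gamma + alpha)
(a finite sum since F has finite support).\<close>
definition contract :: "(mono \<Rightarrow> 'k::field) \<Rightarrow> (mono \<Rightarrow> 'k) \<Rightarrow> (mono \<Rightarrow> 'k)" where
  "contract \<phi> F = (\<lambda>\<gamma>. \<Sum>\<alpha>\<in>{\<alpha>. F (\<gamma> + \<alpha>) \<noteq> 0}. \<phi> \<alpha> * F (\<gamma> + \<alpha>))"

definition kscale :: "'k::field \<Rightarrow> (mono \<Rightarrow> 'k) \<Rightarrow> (mono \<Rightarrow> 'k)" where
  "kscale c F = (\<lambda>\<gamma>. c * F \<gamma>)"

definition kspan :: "(mono \<Rightarrow> 'k::field) set \<Rightarrow> (mono \<Rightarrow> 'k) set" where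
  "kspan S = module.span kscale S"

definition RC :: "nat \<Rightarrow> (mono \<Rightarrow> 'k::field) set \<Rightarrow> (mono \<Rightarrow> 'k) set" where
  "RC r G = kspan {contract \<phi> g | \<phi> g. \<phi> \<in> Rser r \<and> g \<in> G}"

definition AnnR :: "nat \<Rightarrow> (mono \<Rightarrow> 'k::field) set \<Rightarrow> (mono \<Rightarrow> 'k) set" where
  "AnnR r G = {\<phi> \<in> Rser r. \<forall>g\<in>G. contract \<phi> g = 0}"

definition act_set :: "(mono \<Rightarrow> 'k::field) set \<Rightarrow> (mono \<Rightarrow> 'k) \<Rightarrow> (mono \<Rightarrow> 'k) set" where
  "act_set V g = {contract v g | v. v \<in> V}"

definition ssum :: "(mono \<Rightarrow> 'k::field) set \<Rightarrow> (mono \<Rightarrow> 'k) set \<Rightarrow> (mono \<Rightarrow> 'k) set" where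
  "ssum A B = {a + b | a b. a \<in> A \<and> b \<in> B}"

text \<open>Divided power multiplication by Z_u = Z_u^[1]:
X^[beta] Z^[a] * Z_u^[1] = (a_u + 1) X^[beta] Z^[a + e_u].\<close>
definition mulZ :: "(mono \<Rightarrow> 'k::field) \<Rightarrow> nat \<Rightarrow> (mono \<Rightarrow> 'k)" where
  "mulZ g u = (\<lambda>\<gamma>. if 1 \<le> Poly_Mapping.lookup \<gamma> (Z u)
                    then of_nat (Poly_Mapping.lookup \<gamma> (Z u)) * g (\<gamma> - Poly_Mapping.single (Z u) 1)
                    else 0)"

text \<open>The quotient N / M of subspaces of E is zero, i.e. N maps to zero in E / M.\<close>
definition quot_zero :: "(mono \<Rightarrow> 'k::field) set \<Rightarrow> (mono \<Rightarrow> 'k) set \<Rightarrow> bool" where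
  "quot_zero N M \<longleftrightarrow> N \<subseteq> M"

definition Bnum :: "nat \<Rightarrow> nat \<Rightarrow> (mono \<Rightarrow> 'k::field) \<Rightarrow> (nat \<Rightarrow> mono \<Rightarrow> 'k) \<Rightarrow> nat \<Rightarrow> (mono \<Rightarrow> 'k) set" where
  "Bnum r s f h t =
     ssum (RC r (insert f (h ` {1..t})))
          (act_set (AnnR r (insert f (h ` {1..t-1}))) (\<lambda>\<gamma>. \<Sum>u\<in>{t..s}. mulZ (h u) u \<gamma>))"

definition Bden :: "nat \<Rightarrow> nat \<Rightarrow> (mono \<Rightarrow> 'k::field) \<Rightarrow> (nat \<Rightarrow> mono \<Rightarrow> 'k) \<Rightarrow> nat \<Rightarrow> (mono \<Rightarrow> 'k) set" where
  "Bden r s f h t =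
     ssum (RC r (insert f (h ` {1..t-1})))
          (act_set (AnnR r (insert f (h ` {1..t}))) (\<lambda>\<gamma>. \<Sum>u\<in>{t+1..s}. mulZ (h u) u \<gamma>))"

end

theory Submission
  imports Defs
begin

(* Contraction by power series is linear on polynomials, and contracting by psi and then
   by phi is contracting by the product series phi psi.  Hence R o <G> is stable under
   contraction, and Ann_R <G> kills all of R o <G>.

   If h_t lies in R o <f, h_1, ..., h_(t-1)>, adjoining h_t changes neither R o <...> nor
   Ann_R <...>, and every phi in the annihilator kills h_t Z_t because
   phi o (h_t Z_t) = (phi o h_t) Z_t; so numerator and denominator of B_t coincide.
   Conversely, if B_t = 0 then h_t, which lies in the numerator, can be written as
   a + phi o (h_(t+1) Z_(t+1) + ... + h_s Z_s) with a in R o <f, h_1, ..., h_(t-1)>.  Every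
   monomial of the second summand involves some Z_u, whereas h_t and a lie in D; hence
   h_t = a. *)

interpretation ks: module "kscale :: 'k::field \<Rightarrow> (mono \<Rightarrow> 'k) \<Rightarrow> (mono \<Rightarrow> 'k)"
  by unfold_locales (auto simp: kscale_def fun_eq_iff algebra_simps)

lemma kspan_eq_span: "kspan = ks.span"
  by (simp add: kspan_def fun_eq_iff)

lemma finite_summands: "finite {\<alpha>::mono. \<exists>\<beta>. \<alpha> + \<beta> = \<delta>}"
proof -
  let ?K = "Poly_Mapping.keys \<delta>"
  let ?B = "\<Union>v\<in>?K. {..Poly_Mapping.lookup \<delta> v}"
  have le: "Poly_Mapping.lookup \<alpha> v \<le> Poly_Mapping.lookup \<delta> v" if "\<alpha> + \<beta> = \<delta>" for \<alpha> \<beta> v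
    using that by (auto simp: lookup_add)
  have "Poly_Mapping.lookup ` {\<alpha>. \<exists>\<beta>. \<alpha> + \<beta> = \<delta>} \<subseteq>
      {g. \<forall>v. (v \<in> ?K \<longrightarrow> g v \<in> ?B) \<and> (v \<notin> ?K \<longrightarrow> g v = 0)}"
  proof (intro subsetI CollectI allI conjI impI)
    fix g v assume "g \<in> Poly_Mapping.lookup ` {\<alpha>. \<exists>\<beta>. \<alpha> + \<beta> = \<delta>}"
    then obtain \<alpha> \<beta> where g: "g = Poly_Mapping.lookup \<alpha>" and \<alpha>: "\<alpha> + \<beta> = \<delta>" by blast
    show "g v \<in> ?B" if "v \<in> ?K"
      using that le[OF \<alpha>, of v] g by blast
    show "g v = 0" if "v \<notin> ?K"
      using that le[OF \<alpha>, of v] g by (simp add: in_keys_iff)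
  qed
  moreover have "finite {g. \<forall>v. (v \<in> ?K \<longrightarrow> g v \<in> ?B) \<and> (v \<notin> ?K \<longrightarrow> g v = 0)}"
    by (rule finite_set_of_finite_funs) auto
  moreover have "inj_on Poly_Mapping.lookup {\<alpha>. \<exists>\<beta>. \<alpha> + \<beta> = \<delta>}"
    by (simp add: inj_on_def)
  ultimately show ?thesis
    using finite_imageD finite_subset by blast
qed

lemma finite_decompositions: "finite {(\<alpha>, \<beta>). \<alpha> + \<beta> = (\<delta>::mono)}"
proof -
  have "{(\<alpha>, \<beta>). \<alpha> + \<beta> = \<delta>} \<subseteq> (\<lambda>\<alpha>. (\<alpha>, \<delta> - \<alpha>)) ` {\<alpha>. \<exists>\<beta>. \<alpha> + \<beta> = \<delta>}"
    by auto
  then show ?thesis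
    using finite_summands finite_subset by blast
qed

lemma finite_shifted_support:
  assumes "finite {\<gamma>. F \<gamma> \<noteq> 0}"
  shows "finite {\<alpha>::mono. F (\<gamma> + \<alpha>) \<noteq> 0}"
  using finite_vimageI[OF assms, of "(+) \<gamma>"] by (simp add: inj_def vimage_def)

lemma contract_eq_sum:
  assumes "finite S" "{\<alpha>. F (\<gamma> + \<alpha>) \<noteq> 0} \<subseteq> S"
  shows "contract \<phi> F \<gamma> = (\<Sum>\<alpha>\<in>S. \<phi> \<alpha> * F (\<gamma> + \<alpha>))"
  unfolding contract_def using assms by (intro sum.mono_neutral_left) auto

lemma contract_zero_right [simp]: "contract \<phi> 0 = 0"
  by (simp add: contract_def fun_eq_iff)

lemma contract_zero_left [simp]: "contract (\<lambda>_. 0) F = 0"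
  by (simp add: contract_def fun_eq_iff)

lemma contract_add:
  assumes "finite {\<gamma>. F \<gamma> \<noteq> 0}" "finite {\<gamma>. G \<gamma> \<noteq> 0}"
  shows "contract \<phi> (F + G) = contract \<phi> F + contract \<phi> G"
proof
  fix \<gamma>
  let ?S = "{\<alpha>. F (\<gamma> + \<alpha>) \<noteq> 0} \<union> {\<alpha>. G (\<gamma> + \<alpha>) \<noteq> 0}"
  have S: "finite ?S"
    using finite_shifted_support assms by blast
  have "contract \<phi> (F + G) \<gamma> = (\<Sum>\<alpha>\<in>?S. \<phi> \<alpha> * F (\<gamma> + \<alpha>)) + (\<Sum>\<alpha>\<in>?S. \<phi> \<alpha> * G (\<gamma> + \<alpha>))"
    by (subst contract_eq_sum[OF S]) (auto simp: sum.distrib distrib_left)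
  also have "\<dots> = contract \<phi> F \<gamma> + contract \<phi> G \<gamma>"
    by (subst (1 2) contract_eq_sum[OF S]) auto
  finally show "contract \<phi> (F + G) \<gamma> = (contract \<phi> F + contract \<phi> G) \<gamma>"
    by simp
qed

lemma contract_kscale: "contract \<phi> (kscale c F) = kscale c (contract \<phi> F)"
proof (cases "c = 0")
  case False
  then have "{\<alpha>. c * F (\<gamma> + \<alpha>) \<noteq> 0} = {\<alpha>. F (\<gamma> + \<alpha>) \<noteq> 0}" for \<gamma>
    by simp
  then show ?thesis
    by (simp add: contract_def kscale_def fun_eq_iff sum_distrib_left mult.left_commute)
qed (simp add: contract_def kscale_def fun_eq_iff)

lemma contract_span:
  assumes V: "ks.subspace V"
    and S: "\<And>g. g \<in> S \<Longrightarrow> finite {\<gamma>. g \<gamma> \<noteq> 0} \<and> contract \<phi> g \<in> V"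
    and x: "x \<in> ks.span S"
  shows "contract \<phi> x \<in> V"
proof -
  (* contract phi is additive only on finitely supported functions, as an infinite sum is 0 *)
  let ?P = "\<lambda>x. finite {\<gamma>. x \<gamma> \<noteq> 0} \<and> contract \<phi> x \<in> V"
  have "ks.subspace (Collect ?P)"
  proof (rule ks.subspaceI)
    show "0 \<in> Collect ?P"
      using ks.subspace_0[OF V] by simp
    show "x + y \<in> Collect ?P" if "x \<in> Collect ?P" "y \<in> Collect ?P" for x y
    proof -
      have "{\<gamma>. (x + y) \<gamma> \<noteq> 0} \<subseteq> {\<gamma>. x \<gamma> \<noteq> 0} \<union> {\<gamma>. y \<gamma> \<noteq> 0}"
        by auto
      then have "finite {\<gamma>. (x + y) \<gamma> \<noteq> 0}"
        using that finite_subset by auto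
      moreover have "contract \<phi> (x + y) = contract \<phi> x + contract \<phi> y"
        using that by (simp add: contract_add)
      ultimately show ?thesis
        using that ks.subspace_add[OF V] by simp
    qed
    show "kscale c x \<in> Collect ?P" if "x \<in> Collect ?P" for c x
    proof -
      have "{\<gamma>. kscale c x \<gamma> \<noteq> 0} \<subseteq> {\<gamma>. x \<gamma> \<noteq> 0}"
        by (auto simp: kscale_def)
      then show ?thesis
        using that finite_subset ks.subspace_scale[OF V] by (auto simp: contract_kscale)
    qed
  qed
  then show ?thesis
    using ks.span_induct[OF x, of ?P] S by blast
qed

(* The index set is finite (finite_decompositions), so this is the product of power series. *)
definition ser_mult :: "(mono \<Rightarrow> 'k::field) \<Rightarrow> (mono \<Rightarrow> 'k) \<Rightarrow> mono \<Rightarrow> 'k" where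
  "ser_mult \<phi> \<psi> \<delta> = (\<Sum>(\<alpha>, \<beta>)\<in>{(\<alpha>, \<beta>). \<alpha> + \<beta> = \<delta>}. \<phi> \<alpha> * \<psi> \<beta>)"

lemma ser_mult_commute: "ser_mult \<phi> \<psi> = ser_mult \<psi> \<phi>"
proof
  fix \<delta>
  show "ser_mult \<phi> \<psi> \<delta> = ser_mult \<psi> \<phi> \<delta>"
    unfolding ser_mult_def
    by (rule sum.reindex_bij_witness[of _ prod.swap prod.swap])
      (simp_all add: add.commute mult.commute split: prod.splits)
qed

lemma ser_mult_Rser:
  assumes "\<phi> \<in> Rser r" "\<psi> \<in> Rser r"
  shows "ser_mult \<phi> \<psi> \<in> Rser r"
  unfolding Rser_def
proof (intro CollectI allI impI)
  fix \<delta> assume nz: "ser_mult \<phi> \<psi> \<delta> \<noteq> 0"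
  have "\<exists>(\<alpha>, \<beta>)\<in>{(\<alpha>, \<beta>). \<alpha> + \<beta> = \<delta>}. \<phi> \<alpha> * \<psi> \<beta> \<noteq> 0"
  proof (rule ccontr)
    assume "\<not> ?thesis"
    then have "ser_mult \<phi> \<psi> \<delta> = 0"
      unfolding ser_mult_def by (intro sum.neutral) auto
    with nz show False ..
  qed
  then obtain \<alpha> \<beta> where "\<alpha> + \<beta> = \<delta>" "\<phi> \<alpha> * \<psi> \<beta> \<noteq> 0"
    by auto
  then have "\<phi> \<alpha> \<noteq> 0" "\<psi> \<beta> \<noteq> 0"
    by auto
  then have "Poly_Mapping.keys \<alpha> \<subseteq> Xvars r" "Poly_Mapping.keys \<beta> \<subseteq> Xvars r"
    using assms by (auto simp: Rser_def)
  then show "Poly_Mapping.keys \<delta> \<subseteq> Xvars r"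
    using keys_add[of \<alpha> \<beta>] \<open>\<alpha> + \<beta> = \<delta>\<close> by blast
qed

lemma contract_nonzeroD: "contract \<phi> F \<gamma> \<noteq> 0 \<Longrightarrow> \<exists>\<alpha>. F (\<gamma> + \<alpha>) \<noteq> 0"
  unfolding contract_def by (cases "{\<alpha>. F (\<gamma> + \<alpha>) \<noteq> 0} = {}") auto

lemma sum_over_decompositions:
  assumes "finite D"
  shows "(\<Sum>(\<alpha>, \<beta>)\<in>{(\<alpha>, \<beta>). \<alpha> + \<beta> \<in> D}. H \<alpha> \<beta>) =
    (\<Sum>\<delta>\<in>D. \<Sum>(\<alpha>, \<beta>)\<in>{(\<alpha>, \<beta>). \<alpha> + \<beta> = (\<delta>::mono)}. H \<alpha> \<beta>)"
proof -
  have "{(\<alpha>, \<beta>). \<alpha> + \<beta> \<in> D} = (\<Union>\<delta>\<in>D. {(\<alpha>, \<beta>). \<alpha> + \<beta> = \<delta>})"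
    by auto
  then show ?thesis
    using assms finite_decompositions by (simp add: sum.UNION_disjoint disjoint_iff)
qed

lemma contract_contract:
  assumes g: "finite {\<gamma>. g \<gamma> \<noteq> 0}"
  shows "contract \<phi> (contract \<psi> g) = contract (ser_mult \<phi> \<psi>) g"
proof
  fix \<gamma>
  let ?\<Delta> = "{\<delta>. g (\<gamma> + \<delta>) \<noteq> 0}"
  let ?P = "{(\<alpha>, \<beta>). \<alpha> + \<beta> \<in> ?\<Delta>}"
  let ?B = "\<lambda>\<alpha>. {\<beta>. g (\<gamma> + (\<alpha> + \<beta>)) \<noteq> 0}"
  have \<Delta>: "finite ?\<Delta>"
    using finite_shifted_support[OF g] .
  have "?P = (\<Union>\<delta>\<in>?\<Delta>. {(\<alpha>, \<beta>). \<alpha> + \<beta> = \<delta>})"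
    by auto
  then have P: "finite ?P"
    using \<Delta> finite_decompositions by simp
  have B: "finite (?B \<alpha>)" for \<alpha>
    using finite_shifted_support[OF g, of "\<gamma> + \<alpha>"] by (simp add: add.assoc)
  have inner: "contract \<psi> g (\<gamma> + \<alpha>) = (\<Sum>\<beta>\<in>?B \<alpha>. \<psi> \<beta> * g (\<gamma> + (\<alpha> + \<beta>)))" for \<alpha>
    by (simp add: contract_def add.assoc)
  have "{\<alpha>. contract \<psi> g (\<gamma> + \<alpha>) \<noteq> 0} \<subseteq> fst ` ?P"
    using contract_nonzeroD by (force simp: add.assoc)
  then have "contract \<phi> (contract \<psi> g) \<gamma> = (\<Sum>\<alpha>\<in>fst ` ?P. \<phi> \<alpha> * contract \<psi> g (\<gamma> + \<alpha>))"
    using P by (intro contract_eq_sum) auto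
  also have "\<dots> = (\<Sum>\<alpha>\<in>fst ` ?P. \<Sum>\<beta>\<in>?B \<alpha>. \<phi> \<alpha> * \<psi> \<beta> * g (\<gamma> + (\<alpha> + \<beta>)))"
    by (simp add: inner sum_distrib_left mult.assoc)
  also have "\<dots> = (\<Sum>(\<alpha>, \<beta>)\<in>?P. \<phi> \<alpha> * \<psi> \<beta> * g (\<gamma> + (\<alpha> + \<beta>)))"
  proof -
    have "(SIGMA \<alpha>:fst ` ?P. ?B \<alpha>) = ?P"
      by force
    then show ?thesis
      using P B by (simp add: sum.Sigma)
  qed
  also have "\<dots> = (\<Sum>\<delta>\<in>?\<Delta>. \<Sum>(\<alpha>, \<beta>)\<in>{(\<alpha>, \<beta>). \<alpha> + \<beta> = \<delta>}. \<phi> \<alpha> * \<psi> \<beta> * g (\<gamma> + \<delta>))"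
    unfolding sum_over_decompositions[OF \<Delta>] by (intro sum.cong refl) auto
  also have "\<dots> = contract (ser_mult \<phi> \<psi>) g \<gamma>"
    by (subst contract_eq_sum[OF \<Delta>]) (auto simp: ser_mult_def sum_distrib_right case_prod_unfold)
  finally show "contract \<phi> (contract \<psi> g) \<gamma> = contract (ser_mult \<phi> \<psi>) g \<gamma>" .
qed

lemma contract_commute:
  assumes "finite {\<gamma>. g \<gamma> \<noteq> 0}"
  shows "contract \<phi> (contract \<psi> g) = contract \<psi> (contract \<phi> g)"
  using assms by (simp add: contract_contract ser_mult_commute)

lemma contract_finite_support:
  assumes g: "finite {\<gamma>. g \<gamma> \<noteq> 0}"
  shows "finite {\<gamma>. contract \<phi> g \<gamma> \<noteq> 0}"
proof -
  have "{\<gamma>. contract \<phi> g \<gamma> \<noteq> 0} \<subseteq> (\<Union>\<delta>\<in>{\<delta>. g \<delta> \<noteq> 0}. {\<gamma>. \<exists>\<alpha>. \<gamma> + \<alpha> = \<delta>})"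
    using contract_nonzeroD by blast
  then show ?thesis
    using g finite_summands finite_subset by blast
qed

lemma RC_eq_span: "RC r G = ks.span {contract \<phi> g | \<phi> g. \<phi> \<in> Rser r \<and> g \<in> G}"
  by (simp add: RC_def kspan_eq_span)

lemma contract_mem_RC: "\<phi> \<in> Rser r \<Longrightarrow> g \<in> G \<Longrightarrow> contract \<phi> g \<in> RC r G"
  unfolding RC_eq_span by (rule ks.span_base) blast

lemma contract_unit:
  assumes "finite {\<gamma>. g \<gamma> \<noteq> 0}"
  shows "contract (\<lambda>\<alpha>. if \<alpha> = 0 then 1 else 0) g = g"
proof
  fix \<gamma>
  have "contract (\<lambda>\<alpha>. if \<alpha> = 0 then 1 else 0) g \<gamma> = (\<Sum>\<alpha>\<in>{\<alpha>. g (\<gamma> + \<alpha>) \<noteq> 0}. if \<alpha> = 0 then g \<gamma> else 0)"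
    unfolding contract_def by (rule sum.cong) auto
  then show "contract (\<lambda>\<alpha>. if \<alpha> = 0 then 1 else 0) g \<gamma> = g \<gamma>"
    using finite_shifted_support[OF assms] by (simp add: sum.delta)
qed

lemma RC_base:
  assumes "finite {\<gamma>. g \<gamma> \<noteq> 0}" "g \<in> G"
  shows "g \<in> RC r G"
proof -
  have "(\<lambda>\<alpha>. if \<alpha> = 0 then 1 else 0) \<in> Rser r"
    by (auto simp: Rser_def)
  then show ?thesis
    using contract_mem_RC[OF _ assms(2)] contract_unit[OF assms(1)] by metis
qed

lemma RC_contract_closed:
  assumes G: "\<And>g. g \<in> G \<Longrightarrow> finite {\<gamma>. g \<gamma> \<noteq> 0}"
    and \<phi>: "\<phi> \<in> Rser r" and x: "x \<in> RC r G"
  shows "contract \<phi> x \<in> RC r G"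
  unfolding RC_eq_span
proof (rule contract_span[OF ks.subspace_span _ x[unfolded RC_eq_span]])
  fix y assume "y \<in> {contract \<psi> g | \<psi> g. \<psi> \<in> Rser r \<and> g \<in> G}"
  then obtain \<psi> g where y: "y = contract \<psi> g" and \<psi>: "\<psi> \<in> Rser r" and g: "g \<in> G"
    by blast
  have "contract \<phi> y = contract (ser_mult \<phi> \<psi>) g"
    using y G[OF g] by (simp add: contract_contract)
  then show "finite {\<gamma>. y \<gamma> \<noteq> 0} \<and>
      contract \<phi> y \<in> ks.span {contract \<psi> g | \<psi> g. \<psi> \<in> Rser r \<and> g \<in> G}"
    using y G[OF g] contract_finite_support contract_mem_RC[OF ser_mult_Rser[OF \<phi> \<psi>] g]
    by (simp add: RC_eq_span)
qed

lemma AnnR_annihilates_RC: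
  assumes G: "\<And>g. g \<in> G \<Longrightarrow> finite {\<gamma>. g \<gamma> \<noteq> 0}"
    and \<phi>: "\<phi> \<in> AnnR r G" and x: "x \<in> RC r G"
  shows "contract \<phi> x = 0"
proof -
  have "contract \<phi> x \<in> {0}"
  proof (rule contract_span[OF ks.subspace_single_0 _ x[unfolded RC_eq_span]])
    fix y assume "y \<in> {contract \<psi> g | \<psi> g. \<psi> \<in> Rser r \<and> g \<in> G}"
    then obtain \<psi> g where y: "y = contract \<psi> g" and g: "g \<in> G"
      by blast
    have "contract \<phi> y = contract \<psi> (contract \<phi> g)"
      using y G[OF g] by (simp add: contract_commute)
    also have "\<dots> = 0"
      using \<phi> g by (simp add: AnnR_def)
    finally show "finite {\<gamma>. y \<gamma> \<noteq> 0} \<and> contract \<phi> y \<in> {0}"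
      using y G[OF g] contract_finite_support by simp
  qed
  then show ?thesis
    by simp
qed

lemma RC_insert_absorb:
  assumes G: "\<And>g. g \<in> G \<Longrightarrow> finite {\<gamma>. g \<gamma> \<noteq> 0}" and x: "x \<in> RC r G"
  shows "RC r (insert x G) = RC r G"
proof
  have "{contract \<psi> g | \<psi> g. \<psi> \<in> Rser r \<and> g \<in> insert x G} \<subseteq> RC r G"
    using RC_contract_closed[OF G _ x] contract_mem_RC by blast
  then show "RC r (insert x G) \<subseteq> RC r G"
    unfolding RC_eq_span[of r "insert x G"] by (rule ks.span_minimal) (simp add: RC_eq_span)
  show "RC r G \<subseteq> RC r (insert x G)"
    unfolding RC_eq_span by (rule ks.span_mono) blast
qed

lemma AnnR_insert_absorb:
  assumes "\<And>g. g \<in> G \<Longrightarrow> finite {\<gamma>. g \<gamma> \<noteq> 0}" and "x \<in> RC r G"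
  shows "AnnR r (insert x G) = AnnR r G"
  using AnnR_annihilates_RC[OF assms(1) _ assms(2)] by (auto simp: AnnR_def)

lemma DPD_iff:
  "F \<in> DPD r \<longleftrightarrow> finite {\<gamma>. F \<gamma> \<noteq> 0} \<and> (\<forall>\<gamma>. F \<gamma> \<noteq> 0 \<longrightarrow> Poly_Mapping.keys \<gamma> \<subseteq> Xvars r)"
  by (auto simp: DPD_def DPE_def Zvars_def)

lemma subspace_DPD: "ks.subspace (DPD r :: (mono \<Rightarrow> 'k::field) set)"
proof (rule ks.subspaceI)
  show "0 \<in> DPD r"
    by (simp add: DPD_iff)
next
  fix F G :: "mono \<Rightarrow> 'k"
  assume F: "F \<in> DPD r" and G: "G \<in> DPD r"
  have "{\<gamma>. (F + G) \<gamma> \<noteq> 0} \<subseteq> {\<gamma>. F \<gamma> \<noteq> 0} \<union> {\<gamma>. G \<gamma> \<noteq> 0}"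
    by auto
  then have "finite {\<gamma>. (F + G) \<gamma> \<noteq> 0}"
    using F G finite_subset by (auto simp: DPD_iff)
  moreover have "Poly_Mapping.keys \<gamma> \<subseteq> Xvars r" if "(F + G) \<gamma> \<noteq> 0" for \<gamma>
  proof -
    have "F \<gamma> \<noteq> 0 \<or> G \<gamma> \<noteq> 0"
      using that by auto
    then show ?thesis
      using F G by (auto simp: DPD_iff)
  qed
  ultimately show "F + G \<in> DPD r"
    by (simp add: DPD_iff)
next
  fix F :: "mono \<Rightarrow> 'k" and c :: 'k
  assume F: "F \<in> DPD r"
  have "{\<gamma>. kscale c F \<gamma> \<noteq> 0} \<subseteq> {\<gamma>. F \<gamma> \<noteq> 0}"
    by (auto simp: kscale_def)
  then show "kscale c F \<in> DPD r"
    using F finite_subset by (auto simp: DPD_iff kscale_def)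
qed

lemma contract_DPD:
  assumes g: "g \<in> DPD r"
  shows "contract \<phi> g \<in> DPD r"
  unfolding DPD_iff
proof (intro conjI allI impI)
  show "finite {\<gamma>. contract \<phi> g \<gamma> \<noteq> 0}"
    using g contract_finite_support unfolding DPD_iff by blast
  fix \<gamma> assume "contract \<phi> g \<gamma> \<noteq> 0"
  then obtain \<alpha> where "g (\<gamma> + \<alpha>) \<noteq> 0"
    using contract_nonzeroD by blast
  then have "Poly_Mapping.keys (\<gamma> + \<alpha>) \<subseteq> Xvars r"
    using g by (simp add: DPD_iff)
  moreover have "Poly_Mapping.keys \<gamma> \<subseteq> Poly_Mapping.keys (\<gamma> + \<alpha>)"
    by (auto simp: in_keys_iff lookup_add)
  ultimately show "Poly_Mapping.keys \<gamma> \<subseteq> Xvars r"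
    by blast
qed

lemma RC_subset_DPD:
  assumes "G \<subseteq> DPD r"
  shows "RC r G \<subseteq> DPD r"
  unfolding RC_eq_span using assms contract_DPD by (intro ks.span_minimal subspace_DPD) blast

lemma Rser_no_Z:
  assumes "\<phi> \<in> Rser r" "\<phi> \<alpha> \<noteq> 0"
  shows "Poly_Mapping.lookup \<alpha> (Z u) = 0"
proof -
  have "Poly_Mapping.keys \<alpha> \<subseteq> Xvars r"
    using assms by (simp add: Rser_def)
  moreover have "Z u \<notin> Xvars r"
    by (simp add: Xvars_def)
  ultimately show ?thesis
    by (auto simp: in_keys_iff)
qed

lemma diff_single_add_single:
  fixes \<gamma> :: mono
  assumes "1 \<le> Poly_Mapping.lookup \<gamma> v"
  shows "\<gamma> - Poly_Mapping.single v 1 + Poly_Mapping.single v 1 = \<gamma>"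
proof (rule poly_mapping_eqI)
  fix w
  show "Poly_Mapping.lookup (\<gamma> - Poly_Mapping.single v 1 + Poly_Mapping.single v 1) w =
      Poly_Mapping.lookup \<gamma> w"
    using assms by (cases "w = v") (simp_all add: lookup_add lookup_minus lookup_single)
qed

lemma add_diff_single:
  fixes \<gamma> \<alpha> :: mono
  assumes "1 \<le> Poly_Mapping.lookup \<gamma> v"
  shows "\<gamma> + \<alpha> - Poly_Mapping.single v 1 = \<gamma> - Poly_Mapping.single v 1 + \<alpha>"
proof (rule poly_mapping_eqI)
  fix w
  show "Poly_Mapping.lookup (\<gamma> + \<alpha> - Poly_Mapping.single v 1) w =
      Poly_Mapping.lookup (\<gamma> - Poly_Mapping.single v 1 + \<alpha>) w"
    using assms by (cases "w = v") (simp_all add: lookup_add lookup_minus lookup_single)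
qed

lemma mulZ_finite_support:
  assumes "finite {\<gamma>. g \<gamma> \<noteq> 0}"
  shows "finite {\<gamma>. mulZ g u \<gamma> \<noteq> 0}"
proof -
  let ?e = "Poly_Mapping.single (Z u) 1"
  have "{\<gamma>. mulZ g u \<gamma> \<noteq> 0} \<subseteq> (\<lambda>\<delta>. \<delta> + ?e) ` {\<gamma>. g \<gamma> \<noteq> 0}"
  proof
    fix \<gamma> assume "\<gamma> \<in> {\<gamma>. mulZ g u \<gamma> \<noteq> 0}"
    then have "1 \<le> Poly_Mapping.lookup \<gamma> (Z u)" and g: "g (\<gamma> - ?e) \<noteq> 0"
      by (auto simp: mulZ_def split: if_splits)
    then have "\<gamma> = \<gamma> - ?e + ?e"
      by (intro diff_single_add_single[symmetric])
    with g show "\<gamma> \<in> (\<lambda>\<delta>. \<delta> + ?e) ` {\<gamma>. g \<gamma> \<noteq> 0}"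
      by blast
  qed
  then show ?thesis
    using assms finite_subset by blast
qed

lemma contract_mulZ:
  assumes \<phi>: "\<phi> \<in> Rser r" and g: "finite {\<gamma>. g \<gamma> \<noteq> 0}"
  shows "contract \<phi> (mulZ g u) = mulZ (contract \<phi> g) u"
proof
  fix \<gamma> :: mono
  let ?e = "Poly_Mapping.single (Z u) 1" and ?n = "Poly_Mapping.lookup \<gamma> (Z u)"
  have n: "Poly_Mapping.lookup (\<gamma> + \<alpha>) (Z u) = ?n" if "\<phi> \<alpha> \<noteq> 0" for \<alpha>
    using Rser_no_Z[OF \<phi> that] by (simp add: lookup_add)
  show "contract \<phi> (mulZ g u) \<gamma> = mulZ (contract \<phi> g) u \<gamma>"
  proof (cases "1 \<le> ?n")
    case False
    then have "\<phi> \<alpha> * mulZ g u (\<gamma> + \<alpha>) = 0" for \<alpha>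
      using n[of \<alpha>] by (cases "\<phi> \<alpha> = 0") (simp_all add: mulZ_def del: One_nat_def)
    then have "contract \<phi> (mulZ g u) \<gamma> = 0"
      unfolding contract_def by (intro sum.neutral) blast
    then show ?thesis
      using False by (simp add: mulZ_def del: One_nat_def)
  next
    case True
    let ?S = "{\<alpha>. g (\<gamma> - ?e + \<alpha>) \<noteq> 0} \<union> {\<alpha>. mulZ g u (\<gamma> + \<alpha>) \<noteq> 0}"
    have S: "finite ?S"
      using finite_shifted_support g mulZ_finite_support by blast
    have summand: "\<phi> \<alpha> * mulZ g u (\<gamma> + \<alpha>) = of_nat ?n * (\<phi> \<alpha> * g (\<gamma> - ?e + \<alpha>))" for \<alpha>
      using True n[of \<alpha>] add_diff_single[OF True, of \<alpha>]
      by (cases "\<phi> \<alpha> = 0") (simp_all add: mulZ_def del: One_nat_def)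
    have "contract \<phi> (mulZ g u) \<gamma> = (\<Sum>\<alpha>\<in>?S. \<phi> \<alpha> * mulZ g u (\<gamma> + \<alpha>))"
      by (rule contract_eq_sum[OF S]) blast
    also have "\<dots> = of_nat ?n * (\<Sum>\<alpha>\<in>?S. \<phi> \<alpha> * g (\<gamma> - ?e + \<alpha>))"
      unfolding sum_distrib_left by (rule sum.cong[OF refl summand])
    also have "\<dots> = of_nat ?n * contract \<phi> g (\<gamma> - ?e)"
      by (subst contract_eq_sum[OF S]) auto
    also have "\<dots> = mulZ (contract \<phi> g) u \<gamma>"
      using True by (simp add: mulZ_def del: One_nat_def)
    finally show ?thesis .
  qed
qed

lemma finite_support_sum:
  assumes "\<And>u. u \<in> U \<Longrightarrow> finite {\<gamma>. F u \<gamma> \<noteq> 0}"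
  shows "finite {\<gamma>. (\<Sum>u\<in>U. F u \<gamma>) \<noteq> 0}"
proof (cases "finite U")
  case True
  have "{\<gamma>. (\<Sum>u\<in>U. F u \<gamma>) \<noteq> 0} \<subseteq> (\<Union>u\<in>U. {\<gamma>. F u \<gamma> \<noteq> 0})"
    by (auto intro: ccontr simp: sum.neutral)
  then show ?thesis
    using True assms finite_subset by blast
qed simp

definition vanishes_on_Xmonos :: "nat \<Rightarrow> (mono \<Rightarrow> 'k::zero) \<Rightarrow> bool" where
  "vanishes_on_Xmonos r F \<longleftrightarrow> (\<forall>\<gamma>. Poly_Mapping.keys \<gamma> \<subseteq> Xvars r \<longrightarrow> F \<gamma> = 0)"

lemma vanishes_on_Xmonos_mulZ: "vanishes_on_Xmonos r (mulZ g u)"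
  unfolding vanishes_on_Xmonos_def
proof (intro allI impI)
  fix \<gamma> :: mono
  assume "Poly_Mapping.keys \<gamma> \<subseteq> Xvars r"
  moreover have "Z u \<notin> Xvars r"
    by (simp add: Xvars_def)
  ultimately have "Poly_Mapping.lookup \<gamma> (Z u) = 0"
    by (auto simp: in_keys_iff)
  then show "mulZ g u \<gamma> = 0"
    by (simp add: mulZ_def)
qed

lemma vanishes_on_Xmonos_sum:
  "(\<And>u. u \<in> U \<Longrightarrow> vanishes_on_Xmonos r (F u)) \<Longrightarrow> vanishes_on_Xmonos r (\<lambda>\<gamma>. \<Sum>u\<in>U. F u \<gamma>)"
  by (simp add: vanishes_on_Xmonos_def)

lemma vanishes_on_Xmonos_contract:
  assumes \<phi>: "\<phi> \<in> Rser r" and F: "vanishes_on_Xmonos r F"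
  shows "vanishes_on_Xmonos r (contract \<phi> F)"
  unfolding vanishes_on_Xmonos_def
proof (intro allI impI)
  fix \<gamma> :: mono
  assume \<gamma>: "Poly_Mapping.keys \<gamma> \<subseteq> Xvars r"
  have "\<phi> \<alpha> * F (\<gamma> + \<alpha>) = 0" for \<alpha>
  proof (cases "\<phi> \<alpha> = 0")
    case False
    then have "Poly_Mapping.keys \<alpha> \<subseteq> Xvars r"
      using \<phi> by (simp add: Rser_def)
    then have "Poly_Mapping.keys (\<gamma> + \<alpha>) \<subseteq> Xvars r"
      using \<gamma> keys_add[of \<gamma> \<alpha>] by blast
    then show ?thesis
      using F by (simp add: vanishes_on_Xmonos_def)
  qed simp
  then show "contract \<phi> F \<gamma> = 0"
    unfolding contract_def by (intro sum.neutral) blast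
qed

lemma DPD_mem_ssum_RC_act_set:
  assumes G: "G \<subseteq> DPD r" and y: "y \<in> DPD r" and V: "V \<subseteq> Rser r"
    and W: "vanishes_on_Xmonos r W"
    and y_mem: "y \<in> ssum (RC r G) (act_set V W)"
  shows "y \<in> RC r G"
proof -
  obtain a \<phi> where y_eq: "y = a + contract \<phi> W" and a: "a \<in> RC r G" and "\<phi> \<in> V"
    using y_mem by (auto simp: ssum_def act_set_def)
  then have W\<phi>: "vanishes_on_Xmonos r (contract \<phi> W)"
    using V W vanishes_on_Xmonos_contract by blast
  have "a \<in> DPD r"
    using a RC_subset_DPD[OF G] by blast
  have "y = a"
  proof
    fix \<gamma>
    show "y \<gamma> = a \<gamma>"
    proof (cases "Poly_Mapping.keys \<gamma> \<subseteq> Xvars r")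
      case True
      then show ?thesis
        using W\<phi> y_eq by (simp add: vanishes_on_Xmonos_def)
    next
      case False
      then have "y \<gamma> = 0" "a \<gamma> = 0"
        using y \<open>a \<in> DPD r\<close> unfolding DPD_iff by blast+
      then show ?thesis
        by simp
    qed
  qed
  with a show ?thesis
    by simp
qed

lemma RC_subset_ssum_act_set_AnnR: "RC r G \<subseteq> ssum (RC r G) (act_set (AnnR r H) W)"
proof
  fix x assume "x \<in> RC r G"
  moreover have "(\<lambda>_. 0) \<in> AnnR r H"
    by (simp add: AnnR_def Rser_def)
  ultimately show "x \<in> ssum (RC r G) (act_set (AnnR r H) W)"
    unfolding ssum_def act_set_def by (force intro: exI[of _ x] exI[of _ 0])
qed

lemma act_set_AnnR_add_mulZ:
  assumes G: "\<And>g. g \<in> G \<Longrightarrow> finite {\<gamma>. g \<gamma> \<noteq> 0}"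
    and x: "x \<in> RC r G" "finite {\<gamma>. x \<gamma> \<noteq> 0}" and W: "finite {\<gamma>. W \<gamma> \<noteq> 0}"
  shows "act_set (AnnR r G) (mulZ x u + W) = act_set (AnnR r G) W"
proof -
  have eq: "contract \<phi> (mulZ x u + W) = contract \<phi> W" if \<phi>: "\<phi> \<in> AnnR r G" for \<phi>
  proof -
    have "\<phi> \<in> Rser r"
      using \<phi> by (simp add: AnnR_def)
    then have "contract \<phi> (mulZ x u) = mulZ (contract \<phi> x) u"
      using x(2) by (rule contract_mulZ)
    also have "\<dots> = 0"
      using AnnR_annihilates_RC[OF G \<phi> x(1)] by (simp add: mulZ_def fun_eq_iff)
    finally show ?thesis
      using contract_add[OF mulZ_finite_support[OF x(2)] W] by simp
  qed
  then show ?thesis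
    unfolding act_set_def by metis
qed

lemma quot_zero_insert_mulZ_iff:
  assumes G: "G \<subseteq> DPD r" and x: "x \<in> DPD r"
    and W: "finite {\<gamma>. W \<gamma> \<noteq> 0}" "vanishes_on_Xmonos r W"
  shows "quot_zero (ssum (RC r (insert x G)) (act_set (AnnR r G) (mulZ x u + W)))
           (ssum (RC r G) (act_set (AnnR r (insert x G)) W)) \<longleftrightarrow> x \<in> RC r G"
proof
  assume "quot_zero (ssum (RC r (insert x G)) (act_set (AnnR r G) (mulZ x u + W)))
           (ssum (RC r G) (act_set (AnnR r (insert x G)) W))"
  moreover have "x \<in> ssum (RC r (insert x G)) (act_set (AnnR r G) (mulZ x u + W))"
    using x RC_base[OF _ insertI1] RC_subset_ssum_act_set_AnnR by (blast dest: DPD_iff[THEN iffD1])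
  ultimately have "x \<in> ssum (RC r G) (act_set (AnnR r (insert x G)) W)"
    by (auto simp: quot_zero_def)
  then show "x \<in> RC r G"
    using G x W(2) by (intro DPD_mem_ssum_RC_act_set) (auto simp: AnnR_def)
next
  assume x_RC: "x \<in> RC r G"
  have G_fin: "\<And>g. g \<in> G \<Longrightarrow> finite {\<gamma>. g \<gamma> \<noteq> 0}" and x_fin: "finite {\<gamma>. x \<gamma> \<noteq> 0}"
    using G x by (auto simp: DPD_iff)
  show "quot_zero (ssum (RC r (insert x G)) (act_set (AnnR r G) (mulZ x u + W)))
      (ssum (RC r G) (act_set (AnnR r (insert x G)) W))"
    by (simp only: quot_zero_def RC_insert_absorb[OF G_fin x_RC] AnnR_insert_absorb[OF G_fin x_RC]
        act_set_AnnR_add_mulZ[OF G_fin x_RC x_fin W(1)] subset_refl)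
qed

theorem corollary1p44:
  fixes r s j :: nat and f :: "mono \<Rightarrow> 'k::field"
    and h :: "nat \<Rightarrow> mono \<Rightarrow> 'k" and k :: "nat \<Rightarrow> nat" and t :: nat
  assumes f: "f \<in> DPDj r j"
    and kchain1: "s \<ge> 1 \<Longrightarrow> k 1 + 2 \<le> j"
    and kchain: "\<And>u. 1 \<le> u \<Longrightarrow> u < s \<Longrightarrow> k (u + 1) \<le> k u"
    and kpos: "\<And>u. 1 \<le> u \<Longrightarrow> u \<le> s \<Longrightarrow> 1 \<le> k u"
    and h: "\<And>u. 1 \<le> u \<Longrightarrow> u \<le> s \<Longrightarrow> h u \<in> DPDj r (k u)"
    and t: "1 \<le> t" "t \<le> s"
  shows "quot_zero (Bnum r s f h t) (Bden r s f h t) \<longleftrightarrow>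
         h t \<in> RC r (insert f (h ` {1..t-1}))"
proof -
  let ?G = "insert f (h ` {1..t-1})"
  let ?W = "\<lambda>\<gamma>. \<Sum>u\<in>{t+1..s}. mulZ (h u) u \<gamma>"
  have h_DPD: "h u \<in> DPD r" if "1 \<le> u" "u \<le> s" for u
    using h[OF that] by (simp add: DPDj_def)
  have "{1..t} = insert t {1..t-1}"
    using t by auto
  then have "insert f (h ` {1..t}) = insert (h t) ?G"
    by auto
  moreover have "(\<lambda>\<gamma>. \<Sum>u\<in>{t..s}. mulZ (h u) u \<gamma>) = mulZ (h t) t + ?W"
    using t by (simp add: fun_eq_iff sum.atLeast_Suc_atMost)
  ultimately have B:
      "Bnum r s f h t = ssum (RC r (insert (h t) ?G)) (act_set (AnnR r ?G) (mulZ (h t) t + ?W))"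
      "Bden r s f h t = ssum (RC r ?G) (act_set (AnnR r (insert (h t) ?G)) ?W)"
    by (simp_all only: Bnum_def Bden_def)
  have "?G \<subseteq> DPD r"
    using f h_DPD t by (auto simp: DPDj_def)
  moreover have "finite {\<gamma>. ?W \<gamma> \<noteq> 0}"
    using h_DPD t by (intro finite_support_sum mulZ_finite_support) (auto simp: DPD_iff)
  moreover have "vanishes_on_Xmonos r ?W"
    by (intro vanishes_on_Xmonos_sum vanishes_on_Xmonos_mulZ)
  ultimately show ?thesis
    unfolding B using h_DPD t by (intro quot_zero_insert_mulZ_iff) auto
qed

end
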